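(* Suppose that for each sequence $R\in\mathbb{R}^{\mathbb{N}}$, $\mathcal{Y}_R$ is a family of metric spaces with uniform property A. If $\mathcal{X}$ is a family of metric spaces such that $\mathcal{X}$ is uniformly $R$-decomposable over $\mathcal{Y}_R$ for every $R\in\mathbb{R}^{\mathbb{N}}$, then $\mathcal{X}$ has uniform property A.
   Context: A family $\mathcal{U}$ of metric subspaces of a metric space $(X,d)$ is $r$-disjoint if $d(x,y)>r$ whenever $x\in U$, $y\in U'$ and $U\neq U'$ are elements of $\mathcal{U}$. For families $\mathcal{X},\mathcal{Y}$ of metric spaces and $R=(R_1,R_2,\dots)\in\mathbb{R}^{\mathbb{N}}$, $\mathcal{X}$ is uniformly $R$-decomposable over $\mathcal{Y}$ if there is an integer $k$ such that for each $X\in\mathcal{X}$ there exist subcollections $\mathcal{U}_1,\dots,\mathcal{U}_k\subseteq\mathcal{Y}$, consisting of subspaces of $X$ with the induced metric, such that each $\mathcal{U}_i$ is $R_i$-disjoint and $\bigcup_i\mathcal{U}_i$ covers $X$. For a metric space $X$, $\ell^1(X)$ is the $\ell^1$-space of the underlying set and $\xi_x$ denotes the value of a map $\xi\colon X\to\ell^1(X)$ at $x$. Such a map has $\varepsilon$-variation if for each $k\in\mathbb{N}$ and $x_1,x_2\in X$ with $d(x_1,x_2)\le k$ one has $\|\xi_{x_1}-\xi_{x_2}\|_1\le k\varepsilon$. A family $\mathcal{X}$ has uniform property A if for each $\varepsilon>0$ there is $S>0$ such that for each $X\in\mathcal{X}$ there is $\xi\colon X\to\ell^1(X)$ with $\|\xi_x\|_1=1$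 for all $x$, $\xi$ has $\varepsilon$-variation, and $\operatorname{supp}\xi_x\subset\bar B(x,S)$ for all $x\in X$. (The paper introduces uniform property A for families of discrete metric spaces with bounded geometry.) *)

theory Defs
  imports "HOL-Analysis.Analysis"
begin

text \<open>A metric space is represented by its carrier set together with a distance
function; only the values of the distance function on the carrier matter.\<close>

type_synonym 'a mspace = "'a set \<times> ('a \<Rightarrow> 'a \<Rightarrow> real)"

definition metric_on :: "'a set \<Rightarrow> ('a \<Rightarrow> 'a \<Rightarrow> real) \<Rightarrow> bool" where
  "metric_on A d \<longleftrightarrow>
     (\<forall>x\<in>A. \<forall>y\<in>A. 0 \<le> d x y \<and> (d x y = 0 \<longleftrightarrow> x = y) \<and> d x y = d y x) \<and>
     (\<forall>x\<in>A. \<forall>y\<in>A. \<forall>z\<in>A. d x z \<le> d x y + d y z)"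

definition metric_family :: "'a mspace set \<Rightarrow> bool" where
  "metric_family \<F> \<longleftrightarrow> (\<forall>(A, d) \<in> \<F>. metric_on A d)"

definition r_disjoint :: "('a \<Rightarrow> 'a \<Rightarrow> real) \<Rightarrow> real \<Rightarrow> 'a set set \<Rightarrow> bool" where
  "r_disjoint d r \<U> \<longleftrightarrow>
     (\<forall>U\<in>\<U>. \<forall>U'\<in>\<U>. U \<noteq> U' \<longrightarrow> (\<forall>x\<in>U. \<forall>y\<in>U'. d x y > r))"

definition induced_member :: "'a set \<Rightarrow> ('a \<Rightarrow> 'a \<Rightarrow> real) \<Rightarrow> 'a mspace set \<Rightarrow> bool" where
  "induced_member V d \<Y> \<longleftrightarrow>
     (\<exists>(W, e) \<in> \<Y>. W = V \<and> (\<forall>x\<in>V. \<forall>y\<in>V. e x y = d x y))"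

text \<open>Uniform R-decomposability; R = (R_1, R_2, ...) is indexed from 1.\<close>
definition unif_decomposable ::
    "'a mspace set \<Rightarrow> (nat \<Rightarrow> real) \<Rightarrow> 'a mspace set \<Rightarrow> bool" where
  "unif_decomposable \<X> R \<Y> \<longleftrightarrow>
     (\<exists>k::nat. \<forall>(X, d) \<in> \<X>. \<exists>\<U> :: nat \<Rightarrow> 'a set set.
        (\<forall>i\<in>{1..k}. (\<forall>V\<in>\<U> i. V \<subseteq> X \<and> induced_member V d \<Y>) \<and> r_disjoint d (R i) (\<U> i)) \<and>
        X \<subseteq> (\<Union>i\<in>{1..k}. \<Union>(\<U> i)))"

definition l1_norm :: "'a set \<Rightarrow> ('a \<Rightarrow> real) \<Rightarrow> real" where
  "l1_norm A f = infsum (\<lambda>y. \<bar>f y\<bar>) A"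

text \<open>Uniform property A; xi x is the element xi_x of l^1(X), as a function
  vanishing outside X.\<close>
definition uniform_property_A :: "'a mspace set \<Rightarrow> bool" where
  "uniform_property_A \<X> \<longleftrightarrow>
     (\<forall>eps>0. \<exists>S>0. \<forall>(X, d) \<in> \<X>. \<exists>\<xi> :: 'a \<Rightarrow> 'a \<Rightarrow> real.
        (\<forall>x\<in>X. ((\<lambda>y. \<bar>\<xi> x y\<bar>) summable_on X) \<and> l1_norm X (\<xi> x) = 1) \<and>
        (\<forall>k::nat. \<forall>x1\<in>X. \<forall>x2\<in>X. d x1 x2 \<le> real k \<longrightarrow>
            l1_norm X (\<lambda>y. \<xi> x1 y - \<xi> x2 y) \<le> real k * eps) \<and>
        (\<forall>x\<in>X. \<forall>y. \<xi> x y \<noteq> 0 \<longrightarrow> y \<in> X \<and> d x y \<le> S))"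

end

theory Submission
  imports Defs
begin

text \<open>Fix \<epsilon> and scales L_i growing geometrically, and decompose X into families
  \<U>_1, ..., \<U>_K, the i-th being (2 L_i + 2/\<epsilon>)-disjoint and made of spaces that carry
  property A witnesses of small variation. The cutoff w_i = max 0 (1 - d(x, \<Union>\<U>_i) / L_i) is
  1/L_i-Lipschitz and equals 1 on \<Union>\<U>_i, so the stick-breaking weights
  w_i (1 - w_1) ... (1 - w_(i-1)) form a partition of unity. If w_i x > 0, then x lies within
  L_i of a member of \<U>_i, which by disjointness is the same for all such points within 2/\<epsilon>
  of x; x receives the witness of that member at a nearby anchor point. The weighted sum of
  these vectors varies by at most 2 \<Sum> d/L_i plus the variation of the local witnesses, and
  beyond distance 2/\<epsilon> the variation bound is trivial since all vectors have norm 1.\<close>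

lemma abs_summable_on_iff_real:
  fixes f :: "'b \<Rightarrow> real"
  shows "(\<lambda>y. \<bar>f y\<bar>) summable_on A \<longleftrightarrow> f summable_on A"
  using summable_on_iff_abs_summable_on_real[of f A] by simp

lemma summable_on_diff:
  fixes f g :: "'b \<Rightarrow> real"
  assumes "f summable_on A" "g summable_on A"
  shows "(\<lambda>y. f y - g y) summable_on A"
  using summable_on_add[OF assms(1) iffD2[OF summable_on_uminus assms(2)]] by simp

lemma summable_on_sum:
  fixes f :: "'i \<Rightarrow> 'b \<Rightarrow> real"
  assumes "finite I" "\<And>i. i \<in> I \<Longrightarrow> f i summable_on A"
  shows "(\<lambda>y. \<Sum>i\<in>I. f i y) summable_on A"
  using assms by (induction I rule: finite_induct) (simp_all add: summable_on_add)

lemma infsum_sum: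
  fixes f :: "'i \<Rightarrow> 'b \<Rightarrow> real"
  assumes "finite I" "\<And>i. i \<in> I \<Longrightarrow> f i summable_on A"
  shows "infsum (\<lambda>y. \<Sum>i\<in>I. f i y) A = (\<Sum>i\<in>I. infsum (f i) A)"
  using assms
  by (induction I rule: finite_induct) (simp_all add: infsum_add summable_on_sum)

lemma l1_norm_nonneg: "0 \<le> l1_norm A f"
  unfolding l1_norm_def by (rule infsum_nonneg) simp

lemma l1_norm_eq_infsum:
  assumes "\<And>y. 0 \<le> f y"
  shows "l1_norm A f = infsum f A"
  unfolding l1_norm_def using assms by simp

lemma l1_norm_le_infsum:
  fixes f g :: "'b \<Rightarrow> real"
  assumes "f summable_on A" "g summable_on A" "\<And>y. y \<in> A \<Longrightarrow> \<bar>f y\<bar> \<le> g y"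
  shows "l1_norm A f \<le> infsum g A"
  unfolding l1_norm_def
  by (rule infsum_mono) (use assms in \<open>simp_all add: abs_summable_on_iff_real\<close>)

lemma l1_norm_cong_neutral_subset:
  fixes f :: "'b \<Rightarrow> real"
  assumes "V \<subseteq> A" "\<And>y. y \<notin> V \<Longrightarrow> f y = 0"
  shows "l1_norm A f = l1_norm V f"
  unfolding l1_norm_def by (rule infsum_cong_neutral) (use assms in auto)

lemma summable_on_cong_neutral_subset:
  fixes f :: "'b \<Rightarrow> real"
  assumes "V \<subseteq> A" "\<And>y. y \<notin> V \<Longrightarrow> f y = 0"
  shows "f summable_on A \<longleftrightarrow> f summable_on V"
  by (rule summable_on_cong_neutral) (use assms in auto)

lemma l1_norm_sum_le:
  fixes f :: "'i \<Rightarrow> 'b \<Rightarrow> real"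
  assumes "finite I" "\<And>i. i \<in> I \<Longrightarrow> f i summable_on A"
  shows "l1_norm A (\<lambda>y. \<Sum>i\<in>I. f i y) \<le> (\<Sum>i\<in>I. l1_norm A (f i))"
proof -
  have abs_summable: "(\<lambda>y. \<bar>f i y\<bar>) summable_on A" if "i \<in> I" for i
    using assms(2)[OF that] by (simp add: abs_summable_on_iff_real)
  have "l1_norm A (\<lambda>y. \<Sum>i\<in>I. f i y) \<le> infsum (\<lambda>y. \<Sum>i\<in>I. \<bar>f i y\<bar>) A"
    using assms abs_summable by (intro l1_norm_le_infsum summable_on_sum sum_abs)
  also have "\<dots> = (\<Sum>i\<in>I. l1_norm A (f i))"
    unfolding l1_norm_def using assms(1) abs_summable by (rule infsum_sum)
  finally show ?thesis .
qed

lemma l1_norm_diff_le: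
  fixes f g :: "'b \<Rightarrow> real"
  assumes "f summable_on A" "g summable_on A"
  shows "l1_norm A (\<lambda>y. f y - g y) \<le> l1_norm A f + l1_norm A g"
proof -
  have abs_summable: "(\<lambda>y. \<bar>f y\<bar>) summable_on A" "(\<lambda>y. \<bar>g y\<bar>) summable_on A"
    using assms by (simp_all add: abs_summable_on_iff_real)
  have "l1_norm A (\<lambda>y. f y - g y) \<le> infsum (\<lambda>y. \<bar>f y\<bar> + \<bar>g y\<bar>) A"
    using assms abs_summable
    by (intro l1_norm_le_infsum summable_on_diff summable_on_add abs_triangle_ineq4)
  also have "\<dots> = l1_norm A f + l1_norm A g"
    unfolding l1_norm_def using abs_summable by (rule infsum_add)
  finally show ?thesis .
qed

lemma l1_norm_abs_diff_le:
  fixes f g :: "'b \<Rightarrow> real"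
  assumes "f summable_on A" "g summable_on A"
  shows "l1_norm A (\<lambda>y. \<bar>f y\<bar> - \<bar>g y\<bar>) \<le> l1_norm A (\<lambda>y. f y - g y)"
proof -
  have "(\<lambda>y. \<bar>f y\<bar>) summable_on A" "(\<lambda>y. \<bar>g y\<bar>) summable_on A"
    using assms by (simp_all add: abs_summable_on_iff_real)
  then show ?thesis
    unfolding l1_norm_def using summable_on_diff[OF assms]
    by (intro infsum_mono abs_triangle_ineq3) (simp_all add: abs_summable_on_iff_real summable_on_diff)
qed

lemma l1_norm_scaled_diff_le:
  fixes f g :: "'b \<Rightarrow> real"
  assumes "f summable_on A" "g summable_on A"
  shows "l1_norm A (\<lambda>y. a * f y - b * g y)
           \<le> \<bar>a - b\<bar> * l1_norm A f + \<bar>b\<bar> * l1_norm A (\<lambda>y. f y - g y)"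
proof -
  have f_abs: "(\<lambda>y. \<bar>f y\<bar>) summable_on A" and fg_abs: "(\<lambda>y. \<bar>f y - g y\<bar>) summable_on A"
    using assms summable_on_diff[OF assms] by (simp_all add: abs_summable_on_iff_real)
  have pointwise: "\<bar>a * f y - b * g y\<bar> \<le> \<bar>a - b\<bar> * \<bar>f y\<bar> + \<bar>b\<bar> * \<bar>f y - g y\<bar>" for y
  proof -
    have "a * f y - b * g y = (a - b) * f y + b * (f y - g y)" by (simp add: algebra_simps)
    then show ?thesis by (metis abs_mult abs_triangle_ineq)
  qed
  have "l1_norm A (\<lambda>y. a * f y - b * g y)
          \<le> infsum (\<lambda>y. \<bar>a - b\<bar> * \<bar>f y\<bar> + \<bar>b\<bar> * \<bar>f y - g y\<bar>) A"
    using assms f_abs fg_abs pointwise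
    by (intro l1_norm_le_infsum summable_on_diff summable_on_add summable_on_cmult_right)
  also have "\<dots> = \<bar>a - b\<bar> * l1_norm A f + \<bar>b\<bar> * l1_norm A (\<lambda>y. f y - g y)"
    unfolding l1_norm_def using f_abs fg_abs
    by (simp add: infsum_add infsum_cmult_right summable_on_cmult_right)
  finally show ?thesis .
qed

lemma l1_norm_cmult:
  fixes f :: "'b \<Rightarrow> real"
  shows "l1_norm A (\<lambda>y. c * f y) = \<bar>c\<bar> * l1_norm A f"
  unfolding l1_norm_def by (simp add: abs_mult infsum_cmult_right')

lemma l1_norm_convex_diff_le:
  fixes f g :: "'b \<Rightarrow> real"
  assumes "f summable_on A" "g summable_on A" "l1_norm A f \<le> 1" "l1_norm A g \<le> 1"
    and "0 \<le> a" "0 \<le> b" "0 \<le> \<delta>"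
    and "0 < a \<Longrightarrow> 0 < b \<Longrightarrow> l1_norm A (\<lambda>y. f y - g y) \<le> \<delta>"
  shows "l1_norm A (\<lambda>y. a * f y - b * g y) \<le> \<bar>a - b\<bar> + b * \<delta>"
proof (cases "0 < a \<and> 0 < b")
  case True
  have "l1_norm A (\<lambda>y. a * f y - b * g y)
          \<le> \<bar>a - b\<bar> * l1_norm A f + \<bar>b\<bar> * l1_norm A (\<lambda>y. f y - g y)"
    using assms(1,2) by (rule l1_norm_scaled_diff_le)
  also have "\<dots> \<le> \<bar>a - b\<bar> * 1 + b * \<delta>"
    using True assms by (intro add_mono mult_mono) (auto simp: l1_norm_nonneg)
  finally show ?thesis by simp
next
  case False
  then have "a = 0 \<or> b = 0" using assms(5,6) by linarith
  have "l1_norm A (\<lambda>y. a * f y - b * g y) \<le> a * l1_norm A f + b * l1_norm A g"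
    using l1_norm_diff_le[of "\<lambda>y. a * f y" A "\<lambda>y. b * g y"] assms(1,2,5,6)
    by (simp add: l1_norm_cmult summable_on_cmult_right)
  also have "\<dots> \<le> \<bar>a - b\<bar>"
    using \<open>a = 0 \<or> b = 0\<close> assms(3-6) by (auto simp: mult_left_le)
  finally show ?thesis using mult_nonneg_nonneg[OF assms(6,7)] by linarith
qed

lemma sum_stick_breaking:
  fixes w :: "nat \<Rightarrow> real"
  shows "(\<Sum>i<n. w i * (\<Prod>j<i. 1 - w j)) = 1 - (\<Prod>j<n. 1 - w j)"
  by (induction n) (simp_all add: algebra_simps)

lemma sum_abs_diff_stick_breaking_le:
  fixes w v :: "nat \<Rightarrow> real"
  assumes "\<And>j. j < n \<Longrightarrow> 0 \<le> w j \<and> w j \<le> 1" "\<And>j. j < n \<Longrightarrow> 0 \<le> v j \<and> v j \<le> 1"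
  shows "(\<Sum>i<n. \<bar>w i * (\<Prod>j<i. 1 - w j) - v i * (\<Prod>j<i. 1 - v j)\<bar>)
           + \<bar>(\<Prod>j<n. 1 - w j) - (\<Prod>j<n. 1 - v j)\<bar> \<le> 2 * (\<Sum>j<n. \<bar>w j - v j\<bar>)"
  using assms
proof (induction n)
  case 0
  then show ?case by simp
next
  case (Suc n)
  define p q where "p = (\<Prod>j<n. 1 - w j)" and "q = (\<Prod>j<n. 1 - v j)"
  have q: "0 \<le> q" "q \<le> 1"
    unfolding q_def using Suc.prems(2) by (auto intro: prod_nonneg prod_le_1)
  have w: "0 \<le> w n" "w n \<le> 1" using Suc.prems(1) by auto
  have "w n * p - v n * q = w n * (p - q) + q * (w n - v n)"
    and "p * (1 - w n) - q * (1 - v n) = (1 - w n) * (p - q) - q * (w n - v n)"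
    by (simp_all add: algebra_simps)
  then have "\<bar>w n * p - v n * q\<bar> \<le> w n * \<bar>p - q\<bar> + q * \<bar>w n - v n\<bar>"
    and "\<bar>p * (1 - w n) - q * (1 - v n)\<bar> \<le> (1 - w n) * \<bar>p - q\<bar> + q * \<bar>w n - v n\<bar>"
    using w q by (metis abs_mult abs_of_nonneg abs_triangle_ineq abs_triangle_ineq4 diff_ge_0_iff_ge)+
  moreover have "q * \<bar>w n - v n\<bar> \<le> \<bar>w n - v n\<bar>" using q by (simp add: mult_left_le_one_le)
  moreover have "w n * \<bar>p - q\<bar> + (1 - w n) * \<bar>p - q\<bar> = \<bar>p - q\<bar>"
    by (simp add: algebra_simps)
  ultimately have
    "\<bar>w n * p - v n * q\<bar> + \<bar>p * (1 - w n) - q * (1 - v n)\<bar> \<le> \<bar>p - q\<bar> + 2 * \<bar>w n - v n\<bar>"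
    by linarith
  moreover have "(\<Sum>i<n. \<bar>w i * (\<Prod>j<i. 1 - w j) - v i * (\<Prod>j<i. 1 - v j)\<bar>) + \<bar>p - q\<bar>
      \<le> 2 * (\<Sum>j<n. \<bar>w j - v j\<bar>)"
    unfolding p_def q_def by (rule Suc.IH) (use Suc.prems in auto)
  ultimately show ?case
    unfolding p_def q_def sum.lessThan_Suc prod.lessThan_Suc by (smt (verit))
qed

lemma metric_on_nonneg: "metric_on X d \<Longrightarrow> x \<in> X \<Longrightarrow> y \<in> X \<Longrightarrow> 0 \<le> d x y"
  and metric_on_eq_0_iff: "metric_on X d \<Longrightarrow> x \<in> X \<Longrightarrow> y \<in> X \<Longrightarrow> d x y = 0 \<longleftrightarrow> x = y"
  and metric_on_commute: "metric_on X d \<Longrightarrow> x \<in> X \<Longrightarrow> y \<in> X \<Longrightarrow> d x y = d y x"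
  and metric_on_triangle: "metric_on X d \<Longrightarrow> x \<in> X \<Longrightarrow> y \<in> X \<Longrightarrow> z \<in> X \<Longrightarrow> d x z \<le> d x y + d y z"
  unfolding metric_on_def by blast+

text \<open>The cutoff max 0 (1 - d(x, A) / L), written without an infimum; the extra 0 covers A = {}.\<close>
definition bump :: "('a \<Rightarrow> 'a \<Rightarrow> real) \<Rightarrow> 'a set \<Rightarrow> real \<Rightarrow> 'a \<Rightarrow> real" where
  "bump d A L x = Sup (insert 0 ((\<lambda>a. max 0 (1 - d x a / L)) ` A))"

context
  fixes X :: "'a set" and d :: "'a \<Rightarrow> 'a \<Rightarrow> real" and A :: "'a set" and L :: real
  assumes metric: "metric_on X d" and subset: "A \<subseteq> X" and L_pos: "0 < L"
begin

lemma bump_bdd_above: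
  assumes "x \<in> X"
  shows "bdd_above (insert 0 ((\<lambda>a. max 0 (1 - d x a / L)) ` A))"
proof (rule bdd_aboveI)
  fix s assume "s \<in> insert 0 ((\<lambda>a. max 0 (1 - d x a / L)) ` A)"
  then show "s \<le> 1"
    using metric_on_nonneg[OF metric] subset assms L_pos by auto
qed

lemma bump_nonneg: "x \<in> X \<Longrightarrow> 0 \<le> bump d A L x"
  unfolding bump_def by (rule cSup_upper[OF _ bump_bdd_above]) simp_all

lemma bump_le_one: "x \<in> X \<Longrightarrow> bump d A L x \<le> 1"
  unfolding bump_def
  by (rule cSup_least) (use metric_on_nonneg[OF metric] subset L_pos in auto)

lemma bump_eq_one:
  assumes "x \<in> A"
  shows "bump d A L x = 1"
proof -
  have "x \<in> X" "d x x = 0" using assms subset metric_on_eq_0_iff[OF metric] by auto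
  then have "1 \<in> (\<lambda>a. max 0 (1 - d x a / L)) ` A"
    using assms by (force intro: rev_image_eqI)
  then have "1 \<le> bump d A L x"
    unfolding bump_def using \<open>x \<in> X\<close> by (intro cSup_upper bump_bdd_above) auto
  then show ?thesis using bump_le_one \<open>x \<in> X\<close> by (simp add: order_antisym)
qed

lemma bump_pos_imp_near:
  assumes "x \<in> X" "0 < bump d A L x"
  shows "\<exists>a\<in>A. d x a < L"
proof -
  obtain s where "s \<in> insert 0 ((\<lambda>a. max 0 (1 - d x a / L)) ` A)" "0 < s"
    using assms less_cSup_iff[OF _ bump_bdd_above] unfolding bump_def by blast
  then obtain a where "a \<in> A" "0 < 1 - d x a / L" by auto
  then show ?thesis using L_pos by (auto simp: field_simps)
qed

lemma bump_le_bump_add: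
  assumes "u \<in> X" "v \<in> X"
  shows "bump d A L u \<le> bump d A L v + d u v / L"
  unfolding bump_def
proof (rule cSup_least)
  fix s assume "s \<in> insert 0 ((\<lambda>a. max 0 (1 - d u a / L)) ` A)"
  then consider "s = 0" | a where "a \<in> A" "s = max 0 (1 - d u a / L)" by auto
  then show "s \<le> Sup (insert 0 ((\<lambda>a. max 0 (1 - d v a / L)) ` A)) + d u v / L"
  proof cases
    case 1
    then show ?thesis
      using bump_nonneg[OF assms(2)] metric_on_nonneg[OF metric assms] L_pos unfolding bump_def by simp
  next
    case 2
    have "d v a \<le> d u v + d u a" "0 \<le> d u v"
      using 2(1) subset assms metric_on_triangle[OF metric, of v u a] metric_on_commute[OF metric, of u v]
        metric_on_nonneg[OF metric assms] by auto
    then have "d v a / L \<le> d u v / L + d u a / L" "0 \<le> d u v / L"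
      using L_pos by (simp_all add: add_divide_distrib[symmetric] divide_right_mono)
    then have "s \<le> max 0 (1 - d v a / L) + d u v / L"
      using max.cobounded1[of 0 "1 - d v a / L"] max.cobounded2[of 0 "1 - d v a / L"]
      unfolding 2(2) by (intro max.boundedI) linarith+
    also have "max 0 (1 - d v a / L) \<le> Sup (insert 0 ((\<lambda>a. max 0 (1 - d v a / L)) ` A))"
      using 2(1) by (intro cSup_upper bump_bdd_above assms) auto
    finally show ?thesis by simp
  qed
qed simp

lemma bump_lipschitz:
  assumes "x \<in> X" "x' \<in> X"
  shows "\<bar>bump d A L x - bump d A L x'\<bar> \<le> d x x' / L"
proof -
  have "d x' x = d x x'" using metric_on_commute[OF metric] assms by blast
  then show ?thesis
    using bump_le_bump_add[OF assms] bump_le_bump_add[OF assms(2,1)] by (simp add: abs_le_iff)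
qed

end

definition property_A_witness ::
    "real \<Rightarrow> real \<Rightarrow> 'a set \<Rightarrow> ('a \<Rightarrow> 'a \<Rightarrow> real) \<Rightarrow> ('a \<Rightarrow> 'a \<Rightarrow> real) \<Rightarrow> bool" where
  "property_A_witness \<epsilon> S X d \<xi> \<longleftrightarrow>
     (\<forall>x\<in>X. ((\<lambda>y. \<bar>\<xi> x y\<bar>) summable_on X) \<and> l1_norm X (\<xi> x) = 1) \<and>
     (\<forall>k::nat. \<forall>x1\<in>X. \<forall>x2\<in>X. d x1 x2 \<le> real k \<longrightarrow>
        l1_norm X (\<lambda>y. \<xi> x1 y - \<xi> x2 y) \<le> real k * \<epsilon>) \<and>
     (\<forall>x\<in>X. \<forall>y. \<xi> x y \<noteq> 0 \<longrightarrow> y \<in> X \<and> d x y \<le> S)"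

lemma uniform_property_A_iff:
  "uniform_property_A \<X> \<longleftrightarrow>
     (\<forall>\<epsilon>>0. \<exists>S>0. \<forall>(X, d) \<in> \<X>. \<exists>\<xi>. property_A_witness \<epsilon> S X d \<xi>)"
  unfolding uniform_property_A_def property_A_witness_def ..

lemma property_A_witness_cong_metric:
  assumes "\<And>x y. x \<in> X \<Longrightarrow> y \<in> X \<Longrightarrow> e x y = d x y"
  shows "property_A_witness \<epsilon> S X e \<xi> \<longleftrightarrow> property_A_witness \<epsilon> S X d \<xi>"
  unfolding property_A_witness_def by (simp add: assms cong: conj_cong ball_cong)

lemma induced_member_property_A_witness:
  assumes "induced_member V d \<Y>" "\<forall>(W, e) \<in> \<Y>. \<exists>\<xi>. property_A_witness \<epsilon> S W e \<xi>"
  shows "\<exists>\<xi>. property_A_witness \<epsilon> S V d \<xi>"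
proof -
  obtain e where "(V, e) \<in> \<Y>" "\<And>x y. x \<in> V \<Longrightarrow> y \<in> V \<Longrightarrow> e x y = d x y"
    using assms(1) unfolding induced_member_def by blast
  then show ?thesis
    using assms(2) property_A_witness_cong_metric[of V e d] by fastforce
qed

lemma property_A_witness_variation_le:
  assumes "property_A_witness \<epsilon> S V d \<zeta>" "a \<in> V" "b \<in> V" "d a b \<le> r"
  shows "l1_norm V (\<lambda>y. \<zeta> a y - \<zeta> b y) \<le> real (nat \<lceil>r\<rceil>) * \<epsilon>"
proof -
  have "d a b \<le> real (nat \<lceil>r\<rceil>)" using assms(4) by linarith
  then show ?thesis using assms(1-3) unfolding property_A_witness_def by blast
qed

text \<open>Beyond distance 2/\<epsilon> the variation bound is automatic, since each vector has norm 1.\<close>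
lemma property_A_witnessI_local:
  assumes metric: "metric_on X d" and "0 < \<epsilon>"
    and norm: "\<And>x. x \<in> X \<Longrightarrow> (\<lambda>y. \<bar>\<xi> x y\<bar>) summable_on X \<and> l1_norm X (\<xi> x) = 1"
    and local_variation: "\<And>x1 x2. x1 \<in> X \<Longrightarrow> x2 \<in> X \<Longrightarrow> d x1 x2 \<le> 2 / \<epsilon> \<Longrightarrow>
           l1_norm X (\<lambda>y. \<xi> x1 y - \<xi> x2 y) \<le> \<epsilon>"
    and support: "\<And>x y. x \<in> X \<Longrightarrow> \<xi> x y \<noteq> 0 \<Longrightarrow> y \<in> X \<and> d x y \<le> S"
  shows "property_A_witness \<epsilon> S X d \<xi>"
  unfolding property_A_witness_def
proof (intro conjI ballI allI impI)
  fix k :: nat and x1 x2 assume x: "x1 \<in> X" "x2 \<in> X" and "d x1 x2 \<le> real k"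
  consider "k = 0" | "2 / \<epsilon> \<le> real k" | "d x1 x2 \<le> 2 / \<epsilon>" "1 \<le> real k"
    using \<open>d x1 x2 \<le> real k\<close> by linarith
  then show "l1_norm X (\<lambda>y. \<xi> x1 y - \<xi> x2 y) \<le> real k * \<epsilon>"
  proof cases
    case 1
    then have "x1 = x2"
      using \<open>d x1 x2 \<le> real k\<close> metric_on_nonneg[OF metric x] metric_on_eq_0_iff[OF metric x] by simp
    then show ?thesis using \<open>0 < \<epsilon>\<close> by (simp add: l1_norm_def)
  next
    case 2
    have "l1_norm X (\<lambda>y. \<xi> x1 y - \<xi> x2 y) \<le> l1_norm X (\<xi> x1) + l1_norm X (\<xi> x2)"
      using norm x by (intro l1_norm_diff_le) (simp_all add: abs_summable_on_iff_real)
    also have "\<dots> = (2 / \<epsilon>) * \<epsilon>" using norm x \<open>0 < \<epsilon>\<close> by simp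
    also have "\<dots> \<le> real k * \<epsilon>" using 2 \<open>0 < \<epsilon>\<close> by (intro mult_right_mono) auto
    finally show ?thesis .
  next
    case 3
    then show ?thesis using local_variation[OF x] \<open>0 < \<epsilon>\<close> by (smt (verit) mult_le_cancel_right1)
  qed
qed (use norm support in auto)

locale decomposition_gluing =
  fixes X :: "'a set" and d :: "'a \<Rightarrow> 'a \<Rightarrow> real"
    and K :: nat and \<U> :: "nat \<Rightarrow> 'a set set"
    and L :: "nat \<Rightarrow> real" and M :: real and \<delta> :: real and S :: "nat \<Rightarrow> real"
    and \<zeta> :: "nat \<Rightarrow> 'a set \<Rightarrow> 'a \<Rightarrow> 'a \<Rightarrow> real"
  assumes metric: "metric_on X d"
    and L_pos: "\<And>i. 0 < L i"
    and \<delta>_nonneg: "0 \<le> \<delta>"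
    and cover: "X \<subseteq> (\<Union>i<K. \<Union>(\<U> i))"
    and member_subset: "\<And>i V. i < K \<Longrightarrow> V \<in> \<U> i \<Longrightarrow> V \<subseteq> X"
    and disjoint: "\<And>i. i < K \<Longrightarrow> r_disjoint d (2 * L i + M) (\<U> i)"
    and local_norm: "\<And>i V a. i < K \<Longrightarrow> V \<in> \<U> i \<Longrightarrow> a \<in> V \<Longrightarrow>
           (\<lambda>y. \<bar>\<zeta> i V a y\<bar>) summable_on V \<and> l1_norm V (\<zeta> i V a) = 1"
    and local_variation: "\<And>i V a b. i < K \<Longrightarrow> V \<in> \<U> i \<Longrightarrow> a \<in> V \<Longrightarrow> b \<in> V \<Longrightarrow>
           d a b \<le> 2 * L i + M \<Longrightarrow> l1_norm V (\<lambda>y. \<zeta> i V a y - \<zeta> i V b y) \<le> \<delta>"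
    and local_support: "\<And>i V a y. i < K \<Longrightarrow> V \<in> \<U> i \<Longrightarrow> a \<in> V \<Longrightarrow> \<zeta> i V a y \<noteq> 0 \<Longrightarrow>
           y \<in> V \<and> d a y \<le> S i"
begin

definition weight :: "nat \<Rightarrow> 'a \<Rightarrow> real" where
  "weight i = bump d (\<Union>(\<U> i)) (L i)"

definition anchor :: "nat \<Rightarrow> 'a \<Rightarrow> 'a \<times> 'a set" where
  "anchor i x = (SOME q. snd q \<in> \<U> i \<and> fst q \<in> snd q \<and> d x (fst q) < L i)"

text \<open>Taking absolute values makes the local vectors nonnegative, so that norms add up
  in the convex combination below.\<close>
definition local_vector :: "nat \<Rightarrow> 'a \<Rightarrow> 'a \<Rightarrow> real" where
  "local_vector i x =
     (if 0 < weight i x then (\<lambda>y. \<bar>\<zeta> i (snd (anchor i x)) (fst (anchor i x)) y\<bar>) else (\<lambda>_. 0))"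

definition coeff :: "nat \<Rightarrow> 'a \<Rightarrow> real" where
  "coeff i x = weight i x * (\<Prod>j<i. 1 - weight j x)"

definition glued :: "'a \<Rightarrow> 'a \<Rightarrow> real" where
  "glued x y = (\<Sum>i<K. coeff i x * local_vector i x y)"

lemma union_subset: "i < K \<Longrightarrow> \<Union>(\<U> i) \<subseteq> X"
  using member_subset by blast

lemma weight_nonneg: "i < K \<Longrightarrow> x \<in> X \<Longrightarrow> 0 \<le> weight i x"
  unfolding weight_def by (rule bump_nonneg[OF metric union_subset L_pos])

lemma weight_le_one: "i < K \<Longrightarrow> x \<in> X \<Longrightarrow> weight i x \<le> 1"
  unfolding weight_def by (rule bump_le_one[OF metric union_subset L_pos])

lemma weight_lipschitz:
  "i < K \<Longrightarrow> x \<in> X \<Longrightarrow> x' \<in> X \<Longrightarrow> \<bar>weight i x - weight i x'\<bar> \<le> d x x' / L i"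
  unfolding weight_def by (rule bump_lipschitz[OF metric union_subset L_pos])

lemma weight_eq_one: "i < K \<Longrightarrow> x \<in> \<Union>(\<U> i) \<Longrightarrow> weight i x = 1"
  unfolding weight_def by (rule bump_eq_one[OF metric union_subset L_pos])

lemma anchor_spec:
  assumes "i < K" "x \<in> X" "0 < weight i x"
  shows "snd (anchor i x) \<in> \<U> i" "fst (anchor i x) \<in> snd (anchor i x)"
    "d x (fst (anchor i x)) < L i"
proof -
  have "\<exists>a\<in>\<Union>(\<U> i). d x a < L i"
    using assms(3) unfolding weight_def
    by (rule bump_pos_imp_near[OF metric union_subset[OF assms(1)] L_pos assms(2)])
  then obtain V a where "V \<in> \<U> i" "a \<in> V" "d x a < L i" by blast
  then have "\<exists>q. snd q \<in> \<U> i \<and> fst q \<in> snd q \<and> d x (fst q) < L i"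
    by (intro exI[of _ "(a, V)"]) simp
  then have "snd (anchor i x) \<in> \<U> i \<and> fst (anchor i x) \<in> snd (anchor i x) \<and> d x (fst (anchor i x)) < L i"
    unfolding anchor_def by (rule someI_ex)
  then show "snd (anchor i x) \<in> \<U> i" "fst (anchor i x) \<in> snd (anchor i x)"
    "d x (fst (anchor i x)) < L i"
    by blast+
qed

lemma anchor_dist_le:
  assumes "i < K" "x1 \<in> X" "x2 \<in> X" "d x1 x2 \<le> M" "0 < weight i x1" "0 < weight i x2"
  shows "d (fst (anchor i x1)) (fst (anchor i x2)) \<le> 2 * L i + M"
proof -
  let ?a1 = "fst (anchor i x1)" and ?a2 = "fst (anchor i x2)"
  note a1 = anchor_spec[OF assms(1,2,5)] and a2 = anchor_spec[OF assms(1,3,6)]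
  have in_X: "?a1 \<in> X" "?a2 \<in> X"
    using member_subset[OF assms(1) a1(1)] member_subset[OF assms(1) a2(1)] a1(2) a2(2) by blast+
  have "d ?a1 ?a2 \<le> d ?a1 x1 + d x1 ?a2" "d x1 ?a2 \<le> d x1 x2 + d x2 ?a2" "d ?a1 x1 = d x1 ?a1"
    using metric_on_triangle[OF metric in_X(1) assms(2) in_X(2)]
      metric_on_triangle[OF metric assms(2,3) in_X(2)] metric_on_commute[OF metric in_X(1) assms(2)]
    by simp_all
  then show ?thesis using a1(3) a2(3) assms(4) by linarith
qed

lemma anchor_member_eq:
  assumes "i < K" "x1 \<in> X" "x2 \<in> X" "d x1 x2 \<le> M" "0 < weight i x1" "0 < weight i x2"
  shows "snd (anchor i x1) = snd (anchor i x2)"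
proof (rule ccontr)
  assume "snd (anchor i x1) \<noteq> snd (anchor i x2)"
  then have "2 * L i + M < d (fst (anchor i x1)) (fst (anchor i x2))"
    using disjoint[OF assms(1)] anchor_spec[OF assms(1,2,5)] anchor_spec[OF assms(1,3,6)]
    unfolding r_disjoint_def by blast
  then show False using anchor_dist_le[OF assms] by linarith
qed

lemma local_vector_nonneg: "0 \<le> local_vector i x y"
  unfolding local_vector_def by simp

lemma abs_local_witness_summable_norm:
  assumes "i < K" "V \<in> \<U> i" "a \<in> V"
  shows "(\<lambda>y. \<bar>\<zeta> i V a y\<bar>) summable_on X" "l1_norm X (\<lambda>y. \<bar>\<zeta> i V a y\<bar>) = 1"
proof -
  have zero: "\<bar>\<zeta> i V a y\<bar> = 0" if "y \<notin> V" for y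
    using local_support[OF assms] that by auto
  show "(\<lambda>y. \<bar>\<zeta> i V a y\<bar>) summable_on X"
    using local_norm[OF assms] summable_on_cong_neutral_subset[OF member_subset[OF assms(1,2)] zero]
    by simp
  show "l1_norm X (\<lambda>y. \<bar>\<zeta> i V a y\<bar>) = 1"
    using local_norm[OF assms] l1_norm_cong_neutral_subset[OF member_subset[OF assms(1,2)] zero]
    by (simp add: l1_norm_def)
qed

lemma local_vector_summable:
  assumes "i < K" "x \<in> X"
  shows "local_vector i x summable_on X"
  using abs_local_witness_summable_norm(1)[OF assms(1) anchor_spec(1,2)[OF assms]]
  unfolding local_vector_def by simp

lemma l1_norm_local_vector:
  assumes "i < K" "x \<in> X"
  shows "l1_norm X (local_vector i x) = (if 0 < weight i x then 1 else 0)"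
  using abs_local_witness_summable_norm(2)[OF assms(1) anchor_spec(1,2)[OF assms]]
  unfolding local_vector_def by (simp add: l1_norm_def)

lemma local_vector_support:
  assumes "i < K" "x \<in> X" "local_vector i x y \<noteq> 0"
  shows "y \<in> X \<and> d x y < L i + S i"
proof -
  let ?a = "fst (anchor i x)" and ?V = "snd (anchor i x)"
  have pos: "0 < weight i x" using assms(3) unfolding local_vector_def by (auto split: if_splits)
  note a = anchor_spec[OF assms(1,2) pos]
  have "\<zeta> i ?V ?a y \<noteq> 0" using assms(3) unfolding local_vector_def by (auto split: if_splits)
  then have "y \<in> ?V" "d ?a y \<le> S i" using local_support[OF assms(1) a(1,2)] by blast+
  moreover have "?V \<subseteq> X" by (rule member_subset[OF assms(1) a(1)])
  moreover have "d x y \<le> d x ?a + d ?a y"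
    using calculation a(2) assms(2) metric_on_triangle[OF metric] by blast
  ultimately show ?thesis using a(3) by auto
qed

lemma local_vector_close:
  assumes "i < K" "x1 \<in> X" "x2 \<in> X" "d x1 x2 \<le> M" "0 < weight i x1" "0 < weight i x2"
  shows "l1_norm X (\<lambda>y. local_vector i x1 y - local_vector i x2 y) \<le> \<delta>"
proof -
  let ?a1 = "fst (anchor i x1)" and ?a2 = "fst (anchor i x2)" and ?V = "snd (anchor i x1)"
  note a1 = anchor_spec[OF assms(1,2,5)] and a2 = anchor_spec[OF assms(1,3,6)]
  have a2_V: "?a2 \<in> ?V" using a2(2) anchor_member_eq[OF assms] by simp
  have lv: "local_vector i x1 = (\<lambda>y. \<bar>\<zeta> i ?V ?a1 y\<bar>)" "local_vector i x2 = (\<lambda>y. \<bar>\<zeta> i ?V ?a2 y\<bar>)"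
    using assms(5,6) anchor_member_eq[OF assms] unfolding local_vector_def by simp_all
  have summable: "\<zeta> i ?V ?a1 summable_on ?V" "\<zeta> i ?V ?a2 summable_on ?V"
    using local_norm[OF assms(1) a1(1,2)] local_norm[OF assms(1) a1(1) a2_V]
    by (simp_all add: abs_summable_on_iff_real)
  have "l1_norm X (\<lambda>y. local_vector i x1 y - local_vector i x2 y)
      = l1_norm ?V (\<lambda>y. \<bar>\<zeta> i ?V ?a1 y\<bar> - \<bar>\<zeta> i ?V ?a2 y\<bar>)"
    unfolding lv
    by (rule l1_norm_cong_neutral_subset[OF member_subset[OF assms(1) a1(1)]])
      (use local_support[OF assms(1) a1(1,2)] local_support[OF assms(1) a1(1) a2_V] in force)
  also have "\<dots> \<le> l1_norm ?V (\<lambda>y. \<zeta> i ?V ?a1 y - \<zeta> i ?V ?a2 y)"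
    using summable by (rule l1_norm_abs_diff_le)
  also have "\<dots> \<le> \<delta>"
    using local_variation[OF assms(1) a1(1,2) a2_V] anchor_dist_le[OF assms] by simp
  finally show ?thesis .
qed

lemma coeff_nonneg: "i < K \<Longrightarrow> x \<in> X \<Longrightarrow> 0 \<le> coeff i x"
  unfolding coeff_def using weight_nonneg weight_le_one
  by (auto intro!: mult_nonneg_nonneg prod_nonneg)

lemma weight_pos_if_coeff_pos: "i < K \<Longrightarrow> x \<in> X \<Longrightarrow> 0 < coeff i x \<Longrightarrow> 0 < weight i x"
  unfolding coeff_def using weight_nonneg[of i x] by (cases "weight i x = 0") auto

lemma sum_coeff:
  assumes "x \<in> X"
  shows "(\<Sum>i<K. coeff i x) = 1"
proof -
  obtain i where "i < K" "x \<in> \<Union>(\<U> i)" using cover assms by blast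
  then have "(\<Prod>j<K. 1 - weight j x) = 0"
    using weight_eq_one by (intro prod_zero) auto
  then show ?thesis unfolding coeff_def sum_stick_breaking by simp
qed

lemma summable_glued: "x \<in> X \<Longrightarrow> glued x summable_on X"
  unfolding glued_def
  by (intro summable_on_sum summable_on_cmult_right local_vector_summable) auto

lemma l1_norm_glued:
  assumes "x \<in> X"
  shows "l1_norm X (glued x) = 1"
proof -
  have coeff_norm: "coeff i x * l1_norm X (local_vector i x) = coeff i x" if "i < K" for i
    using weight_pos_if_coeff_pos[OF that assms] coeff_nonneg[OF that assms]
      l1_norm_local_vector[OF that assms] by fastforce
  have "l1_norm X (glued x) = infsum (glued x) X"
    unfolding glued_def using assms
    by (intro l1_norm_eq_infsum sum_nonneg mult_nonneg_nonneg coeff_nonneg local_vector_nonneg) auto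
  also have "\<dots> = (\<Sum>i<K. infsum (\<lambda>y. coeff i x * local_vector i x y) X)"
    unfolding glued_def using assms
    by (intro infsum_sum summable_on_cmult_right local_vector_summable) auto
  also have "\<dots> = (\<Sum>i<K. coeff i x * l1_norm X (local_vector i x))"
    by (simp add: infsum_cmult_right' l1_norm_eq_infsum local_vector_nonneg)
  also have "\<dots> = (\<Sum>i<K. coeff i x)" using coeff_norm by (intro sum.cong) auto
  also have "\<dots> = 1" by (rule sum_coeff[OF assms])
  finally show ?thesis .
qed

lemma glued_support:
  assumes "x \<in> X" "glued x y \<noteq> 0"
  shows "\<exists>i<K. y \<in> X \<and> d x y < L i + S i"
proof -
  obtain i where "i \<in> {..<K}" "coeff i x * local_vector i x y \<noteq> 0"
    using assms(2) unfolding glued_def by (rule sum.not_neutral_contains_not_neutral)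
  then show ?thesis using local_vector_support[OF _ assms(1)] by auto
qed

lemma glued_variation:
  assumes x: "x1 \<in> X" "x2 \<in> X" and "d x1 x2 \<le> M"
  shows "l1_norm X (\<lambda>y. glued x1 y - glued x2 y) \<le> 2 * (\<Sum>j<K. d x1 x2 / L j) + \<delta>"
proof -
  have term_le: "l1_norm X (\<lambda>y. coeff i x1 * local_vector i x1 y - coeff i x2 * local_vector i x2 y)
      \<le> \<bar>coeff i x1 - coeff i x2\<bar> + coeff i x2 * \<delta>" if "i \<in> {..<K}" for i
    using that x local_vector_close[OF _ x \<open>d x1 x2 \<le> M\<close>] weight_pos_if_coeff_pos
    by (intro l1_norm_convex_diff_le local_vector_summable coeff_nonneg \<delta>_nonneg)
      (simp_all add: l1_norm_local_vector)
  have "l1_norm X (\<lambda>y. glued x1 y - glued x2 y)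
      \<le> (\<Sum>i<K. l1_norm X (\<lambda>y. coeff i x1 * local_vector i x1 y - coeff i x2 * local_vector i x2 y))"
    unfolding glued_def sum_subtractf[symmetric] using x
    by (intro l1_norm_sum_le summable_on_diff summable_on_cmult_right local_vector_summable) auto
  also have "\<dots> \<le> (\<Sum>i<K. \<bar>coeff i x1 - coeff i x2\<bar> + coeff i x2 * \<delta>)"
    by (rule sum_mono[OF term_le])
  also have "\<dots> = (\<Sum>i<K. \<bar>coeff i x1 - coeff i x2\<bar>) + \<delta>"
    using sum_coeff[OF x(2)] by (simp add: sum.distrib sum_distrib_right[symmetric])
  also have "(\<Sum>i<K. \<bar>coeff i x1 - coeff i x2\<bar>) \<le> 2 * (\<Sum>j<K. \<bar>weight j x1 - weight j x2\<bar>)"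
    using sum_abs_diff_stick_breaking_le[of K "\<lambda>j. weight j x1" "\<lambda>j. weight j x2"] x
      weight_nonneg weight_le_one unfolding coeff_def by (smt (verit))
  also have "\<dots> \<le> 2 * (\<Sum>j<K. d x1 x2 / L j)"
    using weight_lipschitz x by (intro mult_left_mono sum_mono) auto
  finally show ?thesis by simp
qed

end

lemma property_A_witness_of_decomposition:
  fixes X :: "'a set" and \<U> :: "nat \<Rightarrow> 'a set set" and L \<eta> S :: "nat \<Rightarrow> real"
  assumes metric: "metric_on X d" and "0 < \<epsilon>"
    and L_pos: "\<And>i. 0 < L i" and L_large: "2 * (\<Sum>i<K. (2 / \<epsilon>) / L i) \<le> \<epsilon> / 2"
    and cover: "X \<subseteq> (\<Union>i<K. \<Union>(\<U> i))"
    and member_subset: "\<And>i V. i < K \<Longrightarrow> V \<in> \<U> i \<Longrightarrow> V \<subseteq> X"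
    and disjoint: "\<And>i. i < K \<Longrightarrow> r_disjoint d (2 * L i + 2 / \<epsilon>) (\<U> i)"
    and local_witness: "\<And>i V. i < K \<Longrightarrow> V \<in> \<U> i \<Longrightarrow> \<exists>\<zeta>. property_A_witness (\<eta> i) (S i) V d \<zeta>"
    and \<eta>_small: "\<And>i. real (nat \<lceil>2 * L i + 2 / \<epsilon>\<rceil>) * \<eta> i \<le> \<epsilon> / 2"
    and radius: "\<And>i. i < K \<Longrightarrow> L i + S i \<le> S'"
  shows "\<exists>\<xi>. property_A_witness \<epsilon> S' X d \<xi>"
proof -
  define \<zeta> where "\<zeta> i V = (SOME \<zeta>. property_A_witness (\<eta> i) (S i) V d \<zeta>)" for i V
  have \<zeta>: "property_A_witness (\<eta> i) (S i) V d (\<zeta> i V)" if "i < K" "V \<in> \<U> i" for i V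
    unfolding \<zeta>_def using local_witness[OF that] by (rule someI_ex)
  interpret decomposition_gluing X d K \<U> L "2 / \<epsilon>" "\<epsilon> / 2" S \<zeta>
  proof
    fix i V a b assume "i < K" "V \<in> \<U> i" "a \<in> V" "b \<in> V" "d a b \<le> 2 * L i + 2 / \<epsilon>"
    then show "l1_norm V (\<lambda>y. \<zeta> i V a y - \<zeta> i V b y) \<le> \<epsilon> / 2"
      using property_A_witness_variation_le[OF \<zeta>] \<eta>_small by (meson order_trans)
  qed (use assms \<zeta> in \<open>auto simp: property_A_witness_def\<close>)
  have "property_A_witness \<epsilon> S' X d glued"
  proof (rule property_A_witnessI_local[OF metric \<open>0 < \<epsilon>\<close>])
    fix x1 x2 assume x: "x1 \<in> X" "x2 \<in> X" and "d x1 x2 \<le> 2 / \<epsilon>"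
    then have "(\<Sum>j<K. d x1 x2 / L j) \<le> (\<Sum>j<K. (2 / \<epsilon>) / L j)"
      using L_pos by (intro sum_mono divide_right_mono) (auto simp: less_imp_le)
    then show "l1_norm X (\<lambda>y. glued x1 y - glued x2 y) \<le> \<epsilon>"
      using glued_variation[OF x \<open>d x1 x2 \<le> 2 / \<epsilon>\<close>] L_large by linarith
  next
    fix x y assume "x \<in> X" "glued x y \<noteq> 0"
    then show "y \<in> X \<and> d x y \<le> S'" using glued_support radius by fastforce
  qed (simp add: summable_glued l1_norm_glued abs_summable_on_iff_real)
  then show ?thesis by blast
qed

lemma gluing_parameters:
  fixes \<epsilon> :: real
  assumes "0 < \<epsilon>"
  obtains L \<eta> :: "nat \<Rightarrow> real"
  where "\<And>i. 0 < L i" "\<And>K. 2 * (\<Sum>i<K. (2 / \<epsilon>) / L i) \<le> \<epsilon> / 2"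
    "\<And>i. 0 < \<eta> i" "\<And>i. real (nat \<lceil>2 * L i + 2 / \<epsilon>\<rceil>) * \<eta> i \<le> \<epsilon> / 2"
proof -
  define L :: "nat \<Rightarrow> real" where "L i = 16 * 2 ^ i / \<epsilon>\<^sup>2" for i
  define \<eta> where "\<eta> i = \<epsilon> / (2 * real (nat \<lceil>2 * L i + 2 / \<epsilon>\<rceil>))" for i
  have L_pos: "0 < L i" for i unfolding L_def using assms by simp
  have term_eq: "(2 / \<epsilon>) / L i = \<epsilon> / 8 * (1 / 2) ^ i" for i
    unfolding L_def using assms by (simp add: field_simps power2_eq_square power_one_over)
  have L_large: "2 * (\<Sum>i<K. (2 / \<epsilon>) / L i) \<le> \<epsilon> / 2" for K
  proof -
    have "2 * (\<Sum>i<K. (2 / \<epsilon>) / L i) = \<epsilon> / 4 * (\<Sum>i<K. (1 / 2) ^ i)"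
      unfolding term_eq sum_distrib_left[symmetric] by simp
    also have "\<dots> \<le> \<epsilon> / 4 * 2"
      using assms by (intro mult_left_mono) (simp_all add: sum_gp_strict)
    finally show ?thesis by simp
  qed
  have "0 < 2 * L i + 2 / \<epsilon>" for i
    using L_pos[of i] assms by (intro add_pos_pos) auto
  then have ceiling_ge: "1 \<le> real (nat \<lceil>2 * L i + 2 / \<epsilon>\<rceil>)" for i
    by (simp add: Suc_le_eq)
  have \<eta>_pos: "0 < \<eta> i" for i
    unfolding \<eta>_def using ceiling_ge[of i] assms by (intro divide_pos_pos) linarith+
  have "c * (\<epsilon> / (2 * c)) \<le> \<epsilon> / 2" if "1 \<le> c" for c :: real
    using that by simp
  then have \<eta>_small: "real (nat \<lceil>2 * L i + 2 / \<epsilon>\<rceil>) * \<eta> i \<le> \<epsilon> / 2" for i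
    unfolding \<eta>_def using ceiling_ge .
  show thesis using that L_pos L_large \<eta>_pos \<eta>_small by blast
qed

lemma uniform_property_A_radii:
  assumes "uniform_property_A \<Y>" "\<And>i. 0 < \<eta> i"
  obtains S where "\<And>i. 0 < S i" "\<And>i. \<forall>(W, e) \<in> \<Y>. \<exists>\<xi>. property_A_witness (\<eta> i) (S i) W e \<xi>"
proof -
  have "\<forall>i. \<exists>S>0. \<forall>(W, e) \<in> \<Y>. \<exists>\<xi>. property_A_witness (\<eta> i) S W e \<xi>"
    using assms unfolding uniform_property_A_iff by blast
  then have "\<exists>S. \<forall>i. 0 < S i \<and> (\<forall>(W, e) \<in> \<Y>. \<exists>\<xi>. property_A_witness (\<eta> i) (S i) W e \<xi>)"
    by (rule choice)
  then show thesis using that by blast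
qed

lemma property_A_witness_of_unif_decomposition:
  fixes X :: "'a set" and L \<eta> S :: "nat \<Rightarrow> real"
  assumes metric: "metric_on X d" and "0 < \<epsilon>"
    and L_pos: "\<And>i. 0 < L i" and L_large: "2 * (\<Sum>i<K. (2 / \<epsilon>) / L i) \<le> \<epsilon> / 2"
    and \<eta>_small: "\<And>i. real (nat \<lceil>2 * L i + 2 / \<epsilon>\<rceil>) * \<eta> i \<le> \<epsilon> / 2"
    and S_pos: "\<And>i. 0 < S i"
    and witnesses: "\<And>i. \<forall>(W, e) \<in> \<Y>. \<exists>\<xi>. property_A_witness (\<eta> i) (S i) W e \<xi>"
    and R_Suc: "\<And>i. R (Suc i) = 2 * L i + 2 / \<epsilon>"
    and decomposition: "\<exists>\<U>. (\<forall>i\<in>{1..K}. (\<forall>V\<in>\<U> i. V \<subseteq> X \<and> induced_member V d \<Y>)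
         \<and> r_disjoint d (R i) (\<U> i)) \<and> X \<subseteq> (\<Union>i\<in>{1..K}. \<Union>(\<U> i))"
  shows "\<exists>\<xi>. property_A_witness \<epsilon> (1 + (\<Sum>i<K. L i + S i)) X d \<xi>"
proof -
  obtain \<U> where pieces: "\<forall>i\<in>{1..K}. (\<forall>V\<in>\<U> i. V \<subseteq> X \<and> induced_member V d \<Y>) \<and> r_disjoint d (R i) (\<U> i)"
    and cover: "X \<subseteq> (\<Union>i\<in>{1..K}. \<Union>(\<U> i))"
    by (insert decomposition) (elim exE conjE, rule that)
  show ?thesis
  proof (rule property_A_witness_of_decomposition[where \<U> = "\<lambda>i. \<U> (Suc i)" and \<eta> = \<eta> and S = S])
    show "X \<subseteq> (\<Union>i<K. \<Union>(\<U> (Suc i)))"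
    proof
      fix x assume "x \<in> X"
      then obtain n where "n \<in> {1..K}" "x \<in> \<Union>(\<U> n)" using cover by blast
      then show "x \<in> (\<Union>i<K. \<Union>(\<U> (Suc i)))" by (intro UN_I[of "n - 1"]) auto
    qed
    show "L i + S i \<le> 1 + (\<Sum>i<K. L i + S i)" if "i < K" for i
    proof -
      have "L i + S i \<le> (\<Sum>j<K. L j + S j)"
        using that L_pos S_pos by (intro member_le_sum add_nonneg_nonneg less_imp_le) auto
      then show ?thesis by simp
    qed
    fix i assume "i < K"
    then have i: "Suc i \<in> {1..K}" by simp
    show "r_disjoint d (2 * L i + 2 / \<epsilon>) (\<U> (Suc i))" using bspec[OF pieces i] R_Suc by simp
    fix V assume "V \<in> \<U> (Suc i)"
    then have "V \<subseteq> X" "induced_member V d \<Y>" using bspec[OF pieces i] by blast+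
    then show "V \<subseteq> X" "\<exists>\<zeta>. property_A_witness (\<eta> i) (S i) V d \<zeta>"
      using induced_member_property_A_witness witnesses by blast+
  qed (rule metric \<open>0 < \<epsilon>\<close> L_pos L_large \<eta>_small)+
qed

theorem theorem1p9:
  fixes \<X> :: "'a mspace set" and \<Y> :: "(nat \<Rightarrow> real) \<Rightarrow> 'a mspace set"
  assumes "\<forall>R. metric_family (\<Y> R)"
    and "\<forall>R. uniform_property_A (\<Y> R)"
    and "metric_family \<X>"
    and "\<forall>R. unif_decomposable \<X> R (\<Y> R)"
  shows "uniform_property_A \<X>"
  unfolding uniform_property_A_iff
proof (intro allI impI)
  (* The pieces carry the metric induced from X. *)
  fix \<epsilon> :: real assume "0 < \<epsilon>"
  obtain L \<eta> :: "nat \<Rightarrow> real" where L: "\<And>i. 0 < L i" "\<And>K. 2 * (\<Sum>i<K. (2 / \<epsilon>) / L i) \<le> \<epsilon> / 2"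
    and \<eta>: "\<And>i. 0 < \<eta> i" "\<And>i. real (nat \<lceil>2 * L i + 2 / \<epsilon>\<rceil>) * \<eta> i \<le> \<epsilon> / 2"
    using gluing_parameters[OF \<open>0 < \<epsilon>\<close>] by blast
  define R where "R n = 2 * L (n - 1) + 2 / \<epsilon>" for n
  obtain S where S: "\<And>i. 0 < S i" "\<And>i. \<forall>(W, e) \<in> \<Y> R. \<exists>\<xi>. property_A_witness (\<eta> i) (S i) W e \<xi>"
    using uniform_property_A_radii[of "\<Y> R" \<eta>] assms(2) \<eta>(1) by blast
  from assms(4) have "unif_decomposable \<X> R (\<Y> R)" ..
  then obtain K where K: "\<forall>(X, d) \<in> \<X>. \<exists>\<U>. (\<forall>i\<in>{1..K}. (\<forall>V\<in>\<U> i. V \<subseteq> X \<and> induced_member V d (\<Y> R))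
      \<and> r_disjoint d (R i) (\<U> i)) \<and> X \<subseteq> (\<Union>i\<in>{1..K}. \<Union>(\<U> i))"
    unfolding unif_decomposable_def ..
  have R_Suc: "R (Suc i) = 2 * L i + 2 / \<epsilon>" for i unfolding R_def by simp
  have "0 \<le> (\<Sum>i<K. L i + S i)" using L(1) S(1) by (intro sum_nonneg add_nonneg_nonneg less_imp_le)
  moreover have "\<exists>\<xi>. property_A_witness \<epsilon> (1 + (\<Sum>i<K. L i + S i)) X d \<xi>" if Xd: "(X, d) \<in> \<X>" for X d
  proof -
    have metric: "metric_on X d" using assms(3) Xd unfolding metric_family_def by auto
    show ?thesis
      using bspec[OF K Xd] unfolding case_prod_conv
      by (rule property_A_witness_of_unif_decomposition[OF metric \<open>0 < \<epsilon>\<close> L \<eta>(2) S R_Suc])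
  qed
  ultimately show "\<exists>S'>0. \<forall>(X, d) \<in> \<X>. \<exists>\<xi>. property_A_witness \<epsilon> S' X d \<xi>"
    by (intro exI[of _ "1 + (\<Sum>i<K. L i + S i)"]) auto
qed

end
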